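(* Let $V$ be a vertex operator algebra of CFT-type that satisfies the $C_2$-cofiniteness condition. Let $M$ be a subspace of $V$ with $C_2(V)\subseteq M$ and $\mathbf{1}\notin M$. Then $M$ is an $MZ_{0,-1}$-subspace of $V$ and $r_{0,-1}(M)=\bigoplus_{n=1}^{\infty}V_n$.
   Context: A vertex operator algebra is a $\mathbb{Z}$-graded vertex algebra $V=\bigoplus_{n\in\mathbb{Z}}V_n$ over $\mathbb{C}$ (with $Y(u,z)=\sum_n u_nz^{-n-1}$, $\mathbf{1}\in V_0$, and $u_mV_n\subseteq V_{k+n-m-1}$ for $u\in V_k$), with $\dim V_n<\infty$, $V_n=0$ for $n$ sufficiently negative, and a conformal vector $\omega\in V_2$ whose modes $L(n)$ satisfy the Virasoro relations, $L(0)|_{V_n}=n$, and $Y(L(-1)v,z)=\frac{d}{dz}Y(v,z)$. $V$ is of CFT-type if $V=\bigoplus_{n\ge0}V_n$ and $V_0=\mathbb{C}\mathbf{1}$. $C_2(V)=\operatorname{span}_{\mathbb{C}}\{u_{-2}v:u,v\in V\}$; $V$ satisfies the $C_2$-cofiniteness condition if $\dim V/C_2(V)<\infty$. Iterated products are nested to the right: $v_{n_1}\cdots v_{n_t}v=v_{n_1}(\cdots(v_{n_t}v))$. For a subspace $M\subseteq V$: $r_{0,-1}(M)$ is the set of $v\in V$ for which there is $m\ge 0$ with $v_{n_1}\cdots v_{n_t}v\in M$ for all $t\ge m$ and all $n_1,\dots,n_t\in\{0,-1\}$. $lsr_{0,-1}(M)$ is the set of $v\in V$ such that for every $b\in V$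 there is $m\ge0$ with $b_sv_{n_1}\cdots v_{n_t}v\in M$ for all $t\ge m$ and all $s,n_1,\dots,n_t\in\{0,-1\}$. $rsr_{0,-1}(M)$ is the set of $v\in V$ such that for every $w\in V$ there is $m\ge 0$ with $(v_{n_1}\cdots v_{n_t}v)_nw\in M$ for all $t\ge m$ and all $n,n_1,\dots,n_t\in\{0,-1\}$. $sr_{0,-1}(M)=lsr_{0,-1}(M)\cap rsr_{0,-1}(M)$. $M$ is an $MZ_{0,-1}$-subspace of $V$ if $r_{0,-1}(M)=sr_{0,-1}(M)$. *)

theory Defs
  imports Complex_Main
begin

text \<open>The vertex operator Y(u,z) is
given by its modes: Y u n v = u_n v.\<close>

definition VOA ::
  "(complex \<Rightarrow> 'v::ab_group_add \<Rightarrow> 'v) \<Rightarrow> ('v \<Rightarrow> int \<Rightarrow> 'v \<Rightarrow> 'v) \<Rightarrow> 'v \<Rightarrow> 'v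
     \<Rightarrow> (int \<Rightarrow> 'v set) \<Rightarrow> bool" where
  "VOA smult Y vac om Vg \<longleftrightarrow>
     vector_space smult
     \<comment> \<open>bilinearity of the modes\<close>
   \<and> (\<forall>u n. Vector_Spaces.linear smult smult (Y u n))
   \<and> (\<forall>n v. Vector_Spaces.linear smult smult (\<lambda>u. Y u n v))
     \<comment> \<open>grading: V = direct sum of the subspaces V_n\<close>
   \<and> (\<forall>n. module.subspace smult (Vg n))
   \<and> (\<forall>v. v \<in> module.span smult (\<Union>n. Vg n))
   \<and> (\<forall>n. Vg n \<inter> module.span smult (\<Union>m\<in>-{n}. Vg m) = {0})
   \<and> (\<forall>n. \<exists>S. finite S \<and> module.span smult S = Vg n)
   \<and> (\<exists>N. \<forall>n<N. Vg n = {0})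
   \<and> vac \<in> Vg 0
   \<and> (\<forall>k n m u v. u \<in> Vg k \<longrightarrow> v \<in> Vg n \<longrightarrow> Y u m v \<in> Vg (k + n - m - 1))
     \<comment> \<open>truncation\<close>
   \<and> (\<forall>u v. \<exists>N. \<forall>n\<ge>N. Y u n v = 0)
     \<comment> \<open>vacuum axioms\<close>
   \<and> (\<forall>n v. Y vac n v = (if n = -1 then v else 0))
   \<and> (\<forall>u. Y u (-1) vac = u)
   \<and> (\<forall>u n. n \<ge> 0 \<longrightarrow> Y u n vac = 0)
     \<comment> \<open>Jacobi (Borcherds) identity; both sums are finite by truncation\<close>
   \<and> (\<forall>u v w m n l. \<forall>\<^sub>F N in sequentially.
        (\<Sum>i\<le>N. smult (of_int m gchoose i) (Y (Y u (l + int i) v) (m + n - int i) w))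
      = (\<Sum>i\<le>N. smult ((-1) ^ i * (of_int l gchoose i))
            (Y u (m + l - int i) (Y v (n + int i) w)
             - smult ((-1) powi l) (Y v (n + l - int i) (Y u (m + int i) w)))))
     \<comment> \<open>conformal vector, L(n) = omega_(n+1)\<close>
   \<and> om \<in> Vg 2
   \<and> (\<exists>c::complex. \<forall>m n v.
        Y om (m + 1) (Y om (n + 1) v) - Y om (n + 1) (Y om (m + 1) v)
      = smult (of_int (m - n)) (Y om (m + n + 1) v)
        + (if m + n = 0 then smult ((of_int m ^ 3 - of_int m) / 12 * c) v else 0))
   \<and> (\<forall>n v. v \<in> Vg n \<longrightarrow> Y om 1 v = smult (of_int n) v)
     \<comment> \<open>L(-1)-derivative property: Y(L(-1)v,z) = d/dz Y(v,z)\<close>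
   \<and> (\<forall>v n. Y (Y om 0 v) n = (\<lambda>w. smult (- of_int n) (Y v (n - 1) w)))"

definition CFT_type ::
  "(complex \<Rightarrow> 'v::ab_group_add \<Rightarrow> 'v) \<Rightarrow> 'v \<Rightarrow> (int \<Rightarrow> 'v set) \<Rightarrow> bool" where
  "CFT_type smult vac Vg \<longleftrightarrow> (\<forall>n<0. Vg n = {0}) \<and> Vg 0 = module.span smult {vac}"

definition C2 :: "(complex \<Rightarrow> 'v::ab_group_add \<Rightarrow> 'v) \<Rightarrow> ('v \<Rightarrow> int \<Rightarrow> 'v \<Rightarrow> 'v) \<Rightarrow> 'v set" where
  "C2 smult Y = module.span smult {Y u (-2) v | u v. True}"

text \<open>dim V/C_2(V) < infinity, i.e. C_2(V) has finite codimension.\<close>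
definition C2_cofinite :: "(complex \<Rightarrow> 'v::ab_group_add \<Rightarrow> 'v) \<Rightarrow> ('v \<Rightarrow> int \<Rightarrow> 'v \<Rightarrow> 'v) \<Rightarrow> bool" where
  "C2_cofinite smult Y \<longleftrightarrow> (\<exists>S. finite S \<and> module.span smult (S \<union> C2 smult Y) = UNIV)"

text \<open>iter_prod Y v [n1,...,nt] w = v_{n1}(v_{n2}(... (v_{nt} w)))\<close>
definition iter_prod :: "('v \<Rightarrow> int \<Rightarrow> 'v \<Rightarrow> 'v) \<Rightarrow> 'v \<Rightarrow> int list \<Rightarrow> 'v \<Rightarrow> 'v" where
  "iter_prod Y v ns w = foldr (\<lambda>n x. Y v n x) ns w"

definition r01 :: "('v \<Rightarrow> int \<Rightarrow> 'v \<Rightarrow> 'v) \<Rightarrow> 'v set \<Rightarrow> 'v set" where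
  "r01 Y M = {v. \<exists>m::nat. \<forall>ns. set ns \<subseteq> {0, -1} \<and> m \<le> length ns
                 \<longrightarrow> iter_prod Y v ns v \<in> M}"

definition lsr01 :: "('v \<Rightarrow> int \<Rightarrow> 'v \<Rightarrow> 'v) \<Rightarrow> 'v set \<Rightarrow> 'v set" where
  "lsr01 Y M = {v. \<forall>b. \<exists>m::nat. \<forall>s ns. s \<in> {0, -1} \<and> set ns \<subseteq> {0, -1} \<and> m \<le> length ns
                 \<longrightarrow> Y b s (iter_prod Y v ns v) \<in> M}"

definition rsr01 :: "('v \<Rightarrow> int \<Rightarrow> 'v \<Rightarrow> 'v) \<Rightarrow> 'v set \<Rightarrow> 'v set" where
  "rsr01 Y M = {v. \<forall>w. \<exists>m::nat. \<forall>n ns. n \<in> {0, -1} \<and> set ns \<subseteq> {0, -1} \<and> m \<le> length ns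
                 \<longrightarrow> Y (iter_prod Y v ns v) n w \<in> M}"

definition sr01 :: "('v \<Rightarrow> int \<Rightarrow> 'v \<Rightarrow> 'v) \<Rightarrow> 'v set \<Rightarrow> 'v set" where
  "sr01 Y M = lsr01 Y M \<inter> rsr01 Y M"

definition MZ01_subspace :: "('v \<Rightarrow> int \<Rightarrow> 'v \<Rightarrow> 'v) \<Rightarrow> 'v set \<Rightarrow> bool" where
  "MZ01_subspace Y M \<longleftrightarrow> r01 Y M = sr01 Y M"

end

theory Submission
  imports Defs
begin

text \<open>
  Write V_{\<ge>d} for the span of the homogeneous components of degree at least d.
  The commutator and associativity formulas, together with u_{-k} \<in> C_2(V) for k \<ge> 2
  (from L(-1)), show that C_2(V) is stable under all modes u_s with s \<le> 0 on either
  side, and skew symmetry gives v_0 v \<in> C_2(V). Hence an iterated product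
  v_{n_1} ... v_{n_t} v with all n_i \<in> {0,-1} lies in C_2(V) unless it equals
  (v_{-1})^t v. Being graded of finite codimension, C_2(V) contains some V_{\<ge>D}, so for
  v \<in> V_{\<ge>1} all long products lie in C_2(V) \<subseteq> M; this gives V_{\<ge>1} \<subseteq> sr(M),
  and sr(M) \<subseteq> r(M) by taking b = \<one>. Conversely, let v = c\<one> + x \<in> r(M) with
  x \<in> V_{\<ge>1} and c \<noteq> 0. Then v_{-1} = c + x_{-1}, where x_{-1} raises the degree and is
  therefore nilpotent modulo M; since (v_{-1})^n \<one> \<in> M for large n, this forces \<one> \<in> M.
\<close>

lemma sum_atMost_split_first:
  fixes g :: "nat \<Rightarrow> 'a::comm_monoid_add"
  shows "(\<Sum>i\<le>N. g i) = g 0 + (\<Sum>i\<in>{0<..N}. g i)"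
  by (simp add: sum.head flip: atLeast0AtMost)

context vector_space
begin

lemma linear_image_span_subset:
  assumes f: "Vector_Spaces.linear scale scale f" and S: "subspace S" and G: "f ` G \<subseteq> S"
  shows "f ` span G \<subseteq> S"
proof -
  interpret vector_space_pair scale scale ..
  have "span G \<subseteq> f -` S"
    using G linear_subspace_vimage[OF f S] by (intro span_minimal) auto
  then show ?thesis by blast
qed

lemma linear_funpow:
  assumes "Vector_Spaces.linear scale scale f"
  shows "Vector_Spaces.linear scale scale (f ^^ j)"
proof (induction j)
  case (Suc j)
  show ?case
    using Vector_Spaces.linear_compose[OF Suc.IH assms] by (simp add: comp_def)
qed (simp add: linear_id flip: id_def)

lemma recurrence_array_in_subspace:
  fixes h :: "nat \<Rightarrow> nat \<Rightarrow> 'b"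
  assumes M: "subspace M" and c: "c \<noteq> 0"
    and rec: "\<And>j n. h j (Suc n) = c *s h j n + h (Suc j) n"
    and row_0: "\<And>n. N \<le> n \<Longrightarrow> h 0 n \<in> M"
    and rows_from_D: "\<And>j n. D \<le> j \<Longrightarrow> h j n \<in> M"
  shows "h j n \<in> M"
proof -
  have late_columns: "h j n \<in> M" if "N \<le> n" for j n
    using that
  proof (induction j arbitrary: n)
    case 0
    then show ?case by (rule row_0)
  next
    case (Suc j)
    have "h (Suc j) n = h j (Suc n) - c *s h j n"
      by (simp add: rec)
    then show ?case
      using Suc M by (simp add: subspace_diff subspace_scale)
  qed
  \<comment> \<open>h j n = (h j (Suc n) - h (Suc j) n) / c propagates membership from column Suc n
    to column n, downwards from the rows beyond D.\<close>
  have column: "h j n \<in> M" if next_column: "\<And>j. h j (Suc n) \<in> M" for j n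
  proof (rule inc_induct[of j "max j D"])
    show "h (max j D) n \<in> M"
      by (rule rows_from_D) simp
  next
    fix k assume "h (Suc k) n \<in> M"
    moreover have "h k n = (1 / c) *s (h k (Suc n) - h (Suc k) n)"
      using c by (simp add: rec)
    ultimately show "h k n \<in> M"
      using M next_column by (simp add: subspace_diff subspace_scale)
  qed simp
  have "\<forall>j. h j n \<in> M"
  proof (rule inc_induct[of n "max n N"])
    show "\<forall>j. h j (max n N) \<in> M"
      using late_columns by simp
  qed (use column in auto)
  then show ?thesis by blast
qed

lemma mem_subspace_of_orbit_eventually_mem:
  assumes M: "subspace M" and c: "c \<noteq> 0"
    and T: "Vector_Spaces.linear scale scale T"
    and T_nilpotent: "\<And>y. (T ^^ D) y \<in> M"
    and orbit: "\<And>n. N \<le> n \<Longrightarrow> ((\<lambda>y. c *s y + T y) ^^ n) w \<in> M"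
  shows "w \<in> M"
proof -
  interpret vector_space_pair scale scale ..
  define A where "A = (\<lambda>y. c *s y + T y)"
  define h where "h j n = (T ^^ j) ((A ^^ n) w)" for j n
  have T_power: "Vector_Spaces.linear scale scale (T ^^ j)" for j
    using T by (rule linear_funpow)
  have "h 0 0 \<in> M"
  proof (rule recurrence_array_in_subspace[OF M c, where h = h])
    show "h j (Suc n) = c *s h j n + h (Suc j) n" for j n
      by (simp add: h_def A_def linear_add[OF T_power] linear_scale[OF T_power]
          funpow_swap1[of T])
    show "h 0 n \<in> M" if "N \<le> n" for n
      using orbit[OF that] by (simp add: h_def A_def)
    show "h j n \<in> M" if "D \<le> j" for j n
    proof -
      have "(T ^^ j) y = (T ^^ D) ((T ^^ (j - D)) y)" for y
        using that by (metis funpow_add le_add_diff_inverse comp_apply)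
      then show ?thesis
        using T_nilpotent by (simp add: h_def)
    qed
  qed
  then show ?thesis
    by (simp add: h_def)
qed

end

locale graded_vector_space = vector_space scale
  for scale :: "'a::field \<Rightarrow> 'b::ab_group_add \<Rightarrow> 'b" (infixr \<open>*s\<close> 75) +
  fixes Vg :: "int \<Rightarrow> 'b set"
  assumes subspace_Vg: "subspace (Vg n)"
    and span_Vg: "v \<in> span (\<Union>n. Vg n)"
    and Vg_inter_span_others: "Vg n \<inter> span (\<Union>m\<in>-{n}. Vg m) = {0}"
begin

definition deg_ge :: "int \<Rightarrow> 'b set" where
  "deg_ge d = span (\<Union>e\<in>{d..}. Vg e)"

definition deg_lt :: "int \<Rightarrow> 'b set" where
  "deg_lt d = span (\<Union>e\<in>{..<d}. Vg e)"

lemma subspace_deg_ge: "subspace (deg_ge d)"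
  by (simp add: deg_ge_def)

lemma Vg_subset_deg_ge: "d \<le> e \<Longrightarrow> Vg e \<subseteq> deg_ge d"
  unfolding deg_ge_def by (auto intro: span_base)

lemma deg_ge_antimono: "d \<le> d' \<Longrightarrow> deg_ge d' \<subseteq> deg_ge d"
  unfolding deg_ge_def by (intro span_mono UN_mono) auto

lemma deg_lt_mono: "d \<le> d' \<Longrightarrow> deg_lt d \<subseteq> deg_lt d'"
  unfolding deg_lt_def by (intro span_mono UN_mono) auto

lemma ex_deg_lt: "\<exists>d. v \<in> deg_lt d"
  using span_Vg[of v]
proof (induction rule: span_induct_alt)
  case base
  show ?case by (auto simp: deg_lt_def span_zero)
next
  case (step c x y)
  then obtain n d where x: "x \<in> Vg n" and y: "y \<in> deg_lt d" by blast
  let ?d = "max d (n + 1)"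
  have "x \<in> deg_lt ?d"
    using x unfolding deg_lt_def by (intro span_base UN_I[of n]) auto
  moreover have "y \<in> deg_lt ?d"
    using y deg_lt_mono[of d ?d] by auto
  ultimately have "c *s x + y \<in> deg_lt ?d"
    unfolding deg_lt_def by (intro span_add span_scale)
  then show ?case by blast
qed

lemma finite_subset_deg_lt: "finite S \<Longrightarrow> \<exists>d. S \<subseteq> deg_lt d"
proof (induction S rule: finite_induct)
  case (insert x S)
  then obtain d1 d2 where "S \<subseteq> deg_lt d1" "x \<in> deg_lt d2"
    using ex_deg_lt by blast
  then have "insert x S \<subseteq> deg_lt (max d1 d2)"
    using deg_lt_mono[of d1 "max d1 d2"] deg_lt_mono[of d2 "max d1 d2"] by auto
  then show ?case by blast
qed simp

definition graded_subspace :: "'b set \<Rightarrow> bool" where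
  "graded_subspace U \<longleftrightarrow> subspace U \<and> U \<subseteq> span (\<Union>n. Vg n \<inter> U)"

lemma graded_subspace_component:
  assumes U: "graded_subspace U" and b: "b \<in> U"
  shows "\<exists>b'. b' \<in> Vg d \<inter> U \<and> b - b' \<in> span (\<Union>m\<in>-{d}. Vg m)"
proof -
  have U_sub: "subspace U"
    using U by (simp add: graded_subspace_def)
  have "b \<in> span (\<Union>n. Vg n \<inter> U)"
    using U b by (auto simp: graded_subspace_def)
  then show ?thesis
  proof (induction rule: span_induct_alt)
    case base
    show ?case
      using subspace_0[OF subspace_Vg] subspace_0[OF U_sub] by (intro exI[of _ 0]) (simp add: span_zero)
  next
    case (step c x y)
    then obtain n y' where x: "x \<in> Vg n" "x \<in> U"
      and y': "y' \<in> Vg d" "y' \<in> U" "y - y' \<in> span (\<Union>m\<in>-{d}. Vg m)"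
      by blast
    show ?case
    proof (cases "n = d")
      case True
      then show ?thesis
        using x y' U_sub subspace_Vg
        by (intro exI[of _ "c *s x + y'"]) (auto simp: subspace_add subspace_scale)
    next
      case False
      then have "c *s x \<in> span (\<Union>m\<in>-{d}. Vg m)"
        using x by (auto intro: span_base span_scale)
      then show ?thesis
        using y' by (intro exI[of _ y']) (auto simp: add_diff_eq[symmetric] intro: span_add)
    qed
  qed
qed

lemma cofinite_graded_subspace_contains_deg_ge:
  assumes U: "graded_subspace U" and S: "finite S" "span (S \<union> U) = UNIV"
  shows "\<exists>d. deg_ge d \<subseteq> U"
proof -
  have U_sub: "subspace U"
    using U by (simp add: graded_subspace_def)
  obtain d where d: "S \<subseteq> deg_lt d"
    using finite_subset_deg_lt[OF S(1)] by blast
  have "Vg e \<subseteq> U" if "d \<le> e" for e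
  proof
    fix y assume y: "y \<in> Vg e"
    have "y \<in> span (deg_lt d \<union> U)"
      using S(2) d span_mono[of "S \<union> U" "deg_lt d \<union> U"] by blast
    then obtain a b where ab: "y = a + b" "a \<in> deg_lt d" "b \<in> U"
      using U_sub by (auto simp: span_Un deg_lt_def span_span span_eq_iff[THEN iffD2])
    obtain b' where b': "b' \<in> Vg e" "b' \<in> U" "b - b' \<in> span (\<Union>m\<in>-{e}. Vg m)"
      using graded_subspace_component[OF U ab(3)] by blast
    have "deg_lt d \<subseteq> span (\<Union>m\<in>-{e}. Vg m)"
      unfolding deg_lt_def using that by (intro span_mono UN_mono) auto
    then have "y - b' \<in> span (\<Union>m\<in>-{e}. Vg m)"
      using ab b'(3) span_add by (fastforce simp: add_diff_eq)
    moreover have "y - b' \<in> Vg e"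
      using y b'(1) subspace_Vg by (simp add: subspace_diff)
    ultimately have "y - b' = 0"
      using Vg_inter_span_others[of e] by blast
    then show "y \<in> U"
      using b'(2) by simp
  qed
  then have "deg_ge d \<subseteq> U"
    unfolding deg_ge_def using U_sub by (intro span_minimal) auto
  then show ?thesis by blast
qed

end

locale voa =
  fixes smult :: "complex \<Rightarrow> 'v::ab_group_add \<Rightarrow> 'v"
    and Y :: "'v \<Rightarrow> int \<Rightarrow> 'v \<Rightarrow> 'v"
    and vac om :: 'v
    and Vg :: "int \<Rightarrow> 'v set"
  assumes VOA: "VOA smult Y vac om Vg"
begin

lemma VOA_D:
  "vector_space smult"
  "\<forall>u n. Vector_Spaces.linear smult smult (Y u n)"
  "\<forall>n w. Vector_Spaces.linear smult smult (\<lambda>u. Y u n w)"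
  "\<forall>n. module.subspace smult (Vg n)"
  "\<forall>v. v \<in> module.span smult (\<Union>n. Vg n)"
  "\<forall>n. Vg n \<inter> module.span smult (\<Union>m\<in>-{n}. Vg m) = {0}"
  "\<forall>k n m u v. u \<in> Vg k \<longrightarrow> v \<in> Vg n \<longrightarrow> Y u m v \<in> Vg (k + n - m - 1)"
  "\<forall>n v. Y vac n v = (if n = -1 then v else 0)"
  "\<forall>u. Y u (-1) vac = u"
  "\<forall>u n. n \<ge> 0 \<longrightarrow> Y u n vac = 0"
  "\<forall>u v w m n l. \<forall>\<^sub>F N in sequentially.
        (\<Sum>i\<le>N. smult (of_int m gchoose i) (Y (Y u (l + int i) v) (m + n - int i) w))
      = (\<Sum>i\<le>N. smult ((-1) ^ i * (of_int l gchoose i))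
            (Y u (m + l - int i) (Y v (n + int i) w)
             - smult ((-1) powi l) (Y v (n + l - int i) (Y u (m + int i) w))))"
  "\<forall>v n. Y (Y om 0 v) n = (\<lambda>w. smult (- of_int n) (Y v (n - 1) w))"
  using VOA unfolding VOA_def by - (elim conjE; assumption)+

sublocale graded_vector_space smult Vg
  using VOA_D(1,4-6) by (intro graded_vector_space.intro graded_vector_space_axioms.intro) auto

sublocale vector_space_pair smult smult ..

lemmas Y_linear_right = VOA_D(2)[rule_format]
  and Y_linear_left = VOA_D(3)[rule_format]
  and Y_grade = VOA_D(7)[rule_format]
  and Y_vac_left = VOA_D(8)[rule_format]
  and Y_vac_creation = VOA_D(9)[rule_format]
  and Y_vac_annihilation = VOA_D(10)[rule_format]
  and borcherds_identity = VOA_D(11)[rule_format]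

lemma L_minus_one_derivative: "Y (Y om 0 v) n w = smult (- of_int n) (Y v (n - 1) w)"
  using VOA_D(12) by simp

lemma commutator_formula:
  "\<exists>N. (\<Sum>i\<le>N. smult (of_int m gchoose i) (Y (Y u (int i) v) (m + n - int i) w))
      = Y u m (Y v n w) - Y v n (Y u m w)"
proof -
  obtain N where "(\<Sum>i\<le>N. smult (of_int m gchoose i) (Y (Y u (0 + int i) v) (m + n - int i) w))
      = (\<Sum>i\<le>N. smult ((-1) ^ i * (of_int 0 gchoose i))
            (Y u (m + 0 - int i) (Y v (n + int i) w)
             - smult ((-1) powi 0) (Y v (n + 0 - int i) (Y u (m + int i) w))))"
    using borcherds_identity unfolding eventually_sequentially by blast
  then show ?thesis
    by (auto simp: sum_atMost_split_first gbinomial_0_left)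
qed

lemma associator_formula:
  "\<exists>N. Y (Y u l v) n w
      = (\<Sum>i\<le>N. smult ((-1) ^ i * (of_int l gchoose i))
            (Y u (l - int i) (Y v (n + int i) w)
             - smult ((-1) powi l) (Y v (n + l - int i) (Y u (int i) w))))"
proof -
  obtain N where "(\<Sum>i\<le>N. smult (of_int 0 gchoose i) (Y (Y u (l + int i) v) (0 + n - int i) w))
      = (\<Sum>i\<le>N. smult ((-1) ^ i * (of_int l gchoose i))
            (Y u (0 + l - int i) (Y v (n + int i) w)
             - smult ((-1) powi l) (Y v (n + l - int i) (Y u (0 + int i) w))))"
    using borcherds_identity unfolding eventually_sequentially by blast
  then show ?thesis
    by (auto simp: sum_atMost_split_first gbinomial_0_left)
qed

lemma zero_mode_derivation: "Y u 0 (Y v n w) = Y v n (Y u 0 w) + Y (Y u 0 v) n w"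
  using commutator_formula[of 0 u v n w]
  by (auto simp: sum_atMost_split_first gbinomial_0_left algebra_simps)

abbreviation C2V :: "'v set" where
  "C2V \<equiv> C2 smult Y"

lemma subspace_C2: "subspace C2V"
  by (simp add: C2_def)

lemma Y_minus_two_in_C2: "Y u (-2) v \<in> C2V"
  unfolding C2_def by (rule span_base) blast

lemma Y_mode_le_minus_two_in_C2:
  assumes "k \<le> -2"
  shows "Y u k w \<in> C2V"
proof -
  have "\<forall>u. Y u (-j) w \<in> C2V" if "2 \<le> j" for j
    using that
  proof (induction j rule: int_ge_induct)
    case base
    show ?case using Y_minus_two_in_C2 by simp
  next
    case (step j)
    have "Y u (- (j + 1)) w = smult (1 / of_int j) (Y (Y om 0 u) (-j) w)" for u
      using step.hyps by (simp add: L_minus_one_derivative)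
    then show ?case
      using step.IH subspace_C2 by (simp add: subspace_scale)
  qed
  then show ?thesis
    using assms by (metis minus_minus neg_le_iff_le)
qed

lemma C2_left_ideal:
  assumes s: "s \<le> 0" and c: "c \<in> C2V"
  shows "Y u s c \<in> C2V"
proof -
  have "Y u s (Y a (-2) b) \<in> C2V" for a b
  proof -
    obtain N where N: "(\<Sum>i\<le>N. smult (of_int s gchoose i) (Y (Y u (int i) a) (s + -2 - int i) b))
        = Y u s (Y a (-2) b) - Y a (-2) (Y u s b)"
      using commutator_formula by blast
    have "(\<Sum>i\<le>N. smult (of_int s gchoose i) (Y (Y u (int i) a) (s + -2 - int i) b)) \<in> C2V"
      using s by (intro subspace_sum[OF subspace_C2] subspace_scale[OF subspace_C2]
          Y_mode_le_minus_two_in_C2) simp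
    then have "Y u s (Y a (-2) b) - Y a (-2) (Y u s b) \<in> C2V"
      by (simp only: N)
    then show ?thesis
      using subspace_add[OF subspace_C2 _ Y_minus_two_in_C2] by (metis diff_add_cancel)
  qed
  then have "Y u s ` C2V \<subseteq> C2V"
    unfolding C2_def by (intro linear_image_span_subset Y_linear_right) (auto simp flip: C2_def)
  then show ?thesis
    using c by blast
qed

lemma C2_right_ideal:
  assumes s: "s \<le> 0" and c: "c \<in> C2V"
  shows "Y c s w \<in> C2V"
proof -
  have "Y (Y a (-2) b) s w \<in> C2V" for a b
  proof -
    obtain N where N: "Y (Y a (-2) b) s w
        = (\<Sum>i\<le>N. smult ((-1) ^ i * (of_int (-2) gchoose i))
            (Y a (-2 - int i) (Y b (s + int i) w)
             - smult ((-1) powi (-2)) (Y b (s + -2 - int i) (Y a (int i) w))))"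
      using associator_formula by blast
    show ?thesis
      unfolding N using s
      by (intro subspace_sum[OF subspace_C2] subspace_scale[OF subspace_C2]
          subspace_diff[OF subspace_C2] Y_mode_le_minus_two_in_C2) simp_all
  qed
  then have "(\<lambda>c. Y c s w) ` C2V \<subseteq> C2V"
    unfolding C2_def by (intro linear_image_span_subset Y_linear_left) (auto simp flip: C2_def)
  then show ?thesis
    using c by blast
qed

lemma zero_mode_self_in_C2: "Y v 0 v \<in> C2V"
proof -
  \<comment> \<open>Skew symmetry: the commutator of v_{-1} and v_0, applied to \<one>, gives
    2 v_0 v \<in> C_2(V).\<close>
  define g where "g i = smult (of_int (-1) gchoose i) (Y (Y v (int i) v) (-1 + 0 - int i) vac)"
    for i
  obtain N where N: "(\<Sum>i\<le>N. g i) = Y v (-1) (Y v 0 vac) - Y v 0 (Y v (-1) vac)"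
    unfolding g_def using commutator_formula by blast
  have "(\<Sum>i\<in>{0<..N}. g i) \<in> C2V"
    unfolding g_def
    by (intro subspace_sum[OF subspace_C2] subspace_scale[OF subspace_C2]
        Y_mode_le_minus_two_in_C2) auto
  moreover have "Y v 0 v + (Y v 0 v + (\<Sum>i\<in>{0<..N}. g i)) = 0"
    using N by (simp add: sum_atMost_split_first g_def Y_vac_creation Y_vac_annihilation
        linear_0[OF Y_linear_right])
  ultimately have "Y v 0 v + Y v 0 v \<in> C2V"
    using subspace_neg[OF subspace_C2] by (metis add.assoc add_eq_0_iff2)
  then have "smult (1 / 2) (smult 2 (Y v 0 v)) \<in> C2V"
    using subspace_scale[OF subspace_C2] scale_left_distrib[of 1 1 "Y v 0 v"] by simp
  then show ?thesis by simp
qed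

lemma graded_subspace_C2: "graded_subspace C2V"
proof -
  let ?H = "span (\<Union>n. Vg n \<inter> C2V)"
  have homogeneous: "Y u (-2) w \<in> ?H" if "u \<in> Vg k" "w \<in> Vg e" for u w k e
    using Y_grade[OF that, of "-2"] Y_minus_two_in_C2 by (blast intro: span_base)
  have "Y u (-2) w \<in> ?H" if "u \<in> Vg k" for u w k
  proof -
    have "Y u (-2) ` span (\<Union>n. Vg n) \<subseteq> ?H"
      using homogeneous[OF that] by (intro linear_image_span_subset Y_linear_right) auto
    then show ?thesis
      using span_Vg by blast
  qed
  then have "(\<lambda>u. Y u (-2) w) ` span (\<Union>n. Vg n) \<subseteq> ?H" for w
    by (intro linear_image_span_subset Y_linear_left) auto
  then have "{Y u (-2) w | u w. True} \<subseteq> ?H"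
    using span_Vg by blast
  then have "C2V \<subseteq> ?H"
    unfolding C2_def by (intro span_minimal) auto
  then show ?thesis
    by (simp add: graded_subspace_def subspace_C2)
qed

lemma Y_deg_ge:
  assumes u: "u \<in> deg_ge a" and w: "w \<in> deg_ge d"
  shows "Y u m w \<in> deg_ge (a + d - m - 1)"
proof -
  have homogeneous: "Y u m w \<in> deg_ge (a + d - m - 1)"
    if "u \<in> Vg k" "a \<le> k" "w \<in> Vg e" "d \<le> e" for u w k e
  proof -
    have "a + d - m - 1 \<le> k + e - m - 1"
      using that(2,4) by simp
    then show ?thesis
      using Y_grade[OF that(1,3)] Vg_subset_deg_ge by blast
  qed
  have "Y u m w \<in> deg_ge (a + d - m - 1)" if "u \<in> Vg k" "a \<le> k" for u k
  proof -
    have "Y u m ` deg_ge d \<subseteq> deg_ge (a + d - m - 1)"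
      unfolding deg_ge_def[of d] using homogeneous[OF that]
      by (intro linear_image_span_subset Y_linear_right subspace_deg_ge) auto
    then show ?thesis
      using w by blast
  qed
  then have "(\<lambda>u. Y u m w) ` deg_ge a \<subseteq> deg_ge (a + d - m - 1)"
    unfolding deg_ge_def[of a]
    by (intro linear_image_span_subset Y_linear_left subspace_deg_ge) auto
  then show ?thesis
    using u by blast
qed

lemma iter_prod_Nil [simp]: "iter_prod Y v [] w = w"
  by (simp add: iter_prod_def)

lemma iter_prod_Cons [simp]: "iter_prod Y v (n # ns) w = Y v n (iter_prod Y v ns w)"
  by (simp add: iter_prod_def)

lemma iter_prod_replicate: "iter_prod Y v (replicate k n) w = (Y v n ^^ k) w"
  by (induction k) auto

lemma zero_mode_minus_one_power_in_C2: "Y v 0 ((Y v (-1) ^^ k) v) \<in> C2V"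
proof (induction k)
  case 0
  show ?case using zero_mode_self_in_C2 by simp
next
  case (Suc k)
  let ?y = "(Y v (-1) ^^ k) v"
  have "Y v (-1) (Y v 0 ?y) \<in> C2V"
    using Suc.IH by (rule C2_left_ideal[rotated]) simp
  moreover have "Y (Y v 0 v) (-1) ?y \<in> C2V"
    using zero_mode_self_in_C2 by (rule C2_right_ideal[rotated]) simp
  ultimately show ?case
    using zero_mode_derivation[of v v "-1" ?y] subspace_add[OF subspace_C2] by simp
qed

lemma iter_prod_in_C2_or_minus_one_power:
  assumes "set ns \<subseteq> {0, -1}"
  shows "iter_prod Y v ns v \<in> C2V \<or> iter_prod Y v ns v = (Y v (-1) ^^ length ns) v"
  using assms
proof (induction ns)
  case (Cons n ns)
  then have n: "n = 0 \<or> n = -1"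
    and IH: "iter_prod Y v ns v \<in> C2V \<or> iter_prod Y v ns v = (Y v (-1) ^^ length ns) v"
    by simp_all
  from IH show ?case
  proof
    assume "iter_prod Y v ns v \<in> C2V"
    then show ?case
      using n by (auto intro: C2_left_ideal)
  next
    assume "iter_prod Y v ns v = (Y v (-1) ^^ length ns) v"
    then show ?case
      using n zero_mode_minus_one_power_in_C2 by auto
  qed
qed simp

lemma minus_one_mode_power_deg_ge:
  assumes "x \<in> deg_ge 1" and "y \<in> deg_ge e"
  shows "(Y x (-1) ^^ k) y \<in> deg_ge (e + int k)"
proof (induction k)
  case (Suc k)
  show ?case
    using Y_deg_ge[OF assms(1) Suc.IH, of "-1"] by (simp add: add.commute add.left_commute)
qed (simp add: assms(2))

lemma lsr01_subset_r01: "lsr01 Y M \<subseteq> r01 Y M"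
proof
  fix v assume "v \<in> lsr01 Y M"
  then obtain m :: nat where "\<forall>s ns. s \<in> {0, -1} \<and> set ns \<subseteq> {0, -1} \<and> m \<le> length ns
      \<longrightarrow> Y vac s (iter_prod Y v ns v) \<in> M"
    unfolding lsr01_def by blast
  then have "\<forall>ns. set ns \<subseteq> {0, -1} \<and> m \<le> length ns \<longrightarrow> iter_prod Y v ns v \<in> M"
    by (auto simp: Y_vac_left dest: spec[of _ "-1"])
  then show "v \<in> r01 Y M"
    unfolding r01_def by blast
qed

end

locale C2_cofinite_CFT_voa = voa +
  assumes CFT: "CFT_type smult vac Vg"
    and cofinite: "C2_cofinite smult Y"
begin

lemma deg_ge_0: "deg_ge 0 = UNIV"
proof -
  have "Vg n \<subseteq> deg_ge 0" for n
  proof (cases "n < 0")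
    case True
    then show ?thesis
      using CFT subspace_0[OF subspace_deg_ge] by (auto simp: CFT_type_def)
  qed (simp add: Vg_subset_deg_ge)
  then have "span (\<Union>n. Vg n) \<subseteq> deg_ge 0"
    by (intro span_minimal subspace_deg_ge) blast
  then show ?thesis
    using span_Vg by blast
qed

lemma vacuum_decomposition: "\<exists>c x. v = smult c vac + x \<and> x \<in> deg_ge 1"
proof -
  have "{0::int..} = insert 0 {1..}"
    by auto
  then have "(\<Union>e\<in>{0..}. Vg e) = Vg 0 \<union> (\<Union>e\<in>{1..}. Vg e)"
    by simp
  then have "v \<in> span (Vg 0 \<union> (\<Union>e\<in>{1..}. Vg e))"
    using deg_ge_0 unfolding deg_ge_def by auto
  then obtain a x where "v = a + x" "a \<in> span (Vg 0)" "x \<in> deg_ge 1"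
    unfolding span_Un deg_ge_def by blast
  moreover have "span (Vg 0) = span {vac}"
    using CFT by (simp add: CFT_type_def span_span)
  ultimately show ?thesis
    by (auto simp: span_singleton)
qed

lemma deg_ge_subset_C2: "\<exists>d. deg_ge d \<subseteq> C2V"
  using cofinite graded_subspace_C2 cofinite_graded_subspace_contains_deg_ge
  unfolding C2_cofinite_def by blast

lemma iter_prod_eventually_in_C2:
  assumes v: "v \<in> deg_ge 1"
  shows "\<exists>m::nat. \<forall>ns. set ns \<subseteq> {0, -1} \<and> m \<le> length ns \<longrightarrow> iter_prod Y v ns v \<in> C2V"
proof -
  obtain d where d: "deg_ge d \<subseteq> C2V"
    using deg_ge_subset_C2 by blast
  have "iter_prod Y v ns v \<in> C2V" if ns: "set ns \<subseteq> {0, -1}" "nat d \<le> length ns" for ns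
  proof -
    have "deg_ge (1 + int (length ns)) \<subseteq> deg_ge d"
      using ns(2) by (intro deg_ge_antimono) linarith
    then have "(Y v (-1) ^^ length ns) v \<in> C2V"
      using minus_one_mode_power_deg_ge[OF v v] d by blast
    then show ?thesis
      using iter_prod_in_C2_or_minus_one_power[OF ns(1), of v] by auto
  qed
  then show ?thesis by blast
qed

lemma deg_ge_1_subset_sr01:
  assumes "C2V \<subseteq> M"
  shows "deg_ge 1 \<subseteq> sr01 Y M"
proof
  fix v assume "v \<in> deg_ge 1"
  then obtain m :: nat
    where m: "\<And>ns. set ns \<subseteq> {0, -1} \<Longrightarrow> m \<le> length ns \<Longrightarrow> iter_prod Y v ns v \<in> C2V"
    using iter_prod_eventually_in_C2 by blast
  have "Y b s (iter_prod Y v ns v) \<in> M" "Y (iter_prod Y v ns v) s b \<in> M"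
    if "s \<in> {0, -1}" "set ns \<subseteq> {0, -1}" "m \<le> length ns" for b s ns
    using m[OF that(2,3)] C2_left_ideal[of s] C2_right_ideal[of s] that(1) assms by auto
  then have "v \<in> lsr01 Y M" "v \<in> rsr01 Y M"
    unfolding lsr01_def rsr01_def by blast+
  then show "v \<in> sr01 Y M"
    by (simp add: sr01_def)
qed

lemma r01_subset_deg_ge_1:
  assumes M: "subspace M" "C2V \<subseteq> M" and vac: "vac \<notin> M"
  shows "r01 Y M \<subseteq> deg_ge 1"
proof
  fix v assume "v \<in> r01 Y M"
  then obtain m :: nat
    where m: "\<And>ns. set ns \<subseteq> {0, -1} \<Longrightarrow> m \<le> length ns \<Longrightarrow> iter_prod Y v ns v \<in> M"
    unfolding r01_def by blast
  obtain c x where v: "v = smult c vac + x" and x: "x \<in> deg_ge 1"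
    using vacuum_decomposition by blast
  show "v \<in> deg_ge 1"
  proof (cases "c = 0")
    case True
    then show ?thesis using v x by simp
  next
    case False
    have A_eq: "Y v (-1) = (\<lambda>y. smult c y + Y x (-1) y)"
      unfolding v by (rule ext) (simp add: linear_add[OF Y_linear_left]
          linear_scale[OF Y_linear_left] Y_vac_left)
    obtain d where d: "deg_ge d \<subseteq> C2V"
      using deg_ge_subset_C2 by blast
    have "deg_ge (int (nat d)) \<subseteq> deg_ge d"
      by (intro deg_ge_antimono) simp
    then have "(Y x (-1) ^^ nat d) y \<in> M" for y
      using minus_one_mode_power_deg_ge[OF x, of y 0, where k = "nat d"] deg_ge_0 d M(2)
      by auto
    moreover have "(Y v (-1) ^^ n) vac \<in> M" if n: "Suc m \<le> n" for n
    proof -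
      obtain k where k: "n = Suc k" "m \<le> k"
        using n by (cases n) auto
      have "(Y v (-1) ^^ n) vac = iter_prod Y v (replicate k (-1)) v"
        by (simp add: k(1) funpow_swap1 Y_vac_creation iter_prod_replicate)
      then show ?thesis
        using m[of "replicate k (-1)"] k(2) by (simp add: set_replicate_conv_if)
    qed
    ultimately have "vac \<in> M"
      unfolding A_eq by (rule mem_subspace_of_orbit_eventually_mem[OF M(1) False Y_linear_right])
    then show ?thesis
      using vac by blast
  qed
qed

end

theorem mainTheorem13:
  fixes smult :: "complex \<Rightarrow> 'v::ab_group_add \<Rightarrow> 'v"
    and Y :: "'v \<Rightarrow> int \<Rightarrow> 'v \<Rightarrow> 'v"
    and vac om :: 'v
    and Vg :: "int \<Rightarrow> 'v set"
    and M :: "'v set"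
  assumes "VOA smult Y vac om Vg"
    and "CFT_type smult vac Vg"
    and "C2_cofinite smult Y"
    and "module.subspace smult M"
    and "C2 smult Y \<subseteq> M"
    and "vac \<notin> M"
  shows "MZ01_subspace Y M \<and> r01 Y M = module.span smult (\<Union>n\<in>{1..}. Vg n)"
proof -
  interpret C2_cofinite_CFT_voa smult Y vac om Vg
    using assms(1-3) by (intro C2_cofinite_CFT_voa.intro voa.intro C2_cofinite_CFT_voa_axioms.intro)
  have "r01 Y M \<subseteq> deg_ge 1"
    using assms(4-6) by (rule r01_subset_deg_ge_1)
  moreover have "deg_ge 1 \<subseteq> sr01 Y M"
    using assms(5) by (rule deg_ge_1_subset_sr01)
  moreover have "sr01 Y M \<subseteq> r01 Y M"
    using lsr01_subset_r01 by (auto simp: sr01_def)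
  ultimately have "r01 Y M = deg_ge 1" "sr01 Y M = deg_ge 1"
    by blast+
  then show ?thesis
    by (simp add: MZ01_subspace_def deg_ge_def)
qed

end
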